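(* Finite prime fields $\mathrm{F}_q$ locally approximate the field of real numbers: $\mathsf{lm}^{\mathrm{loc}}\, \mathrm{F}_q = \mathbb{R}$, i.e. the local ultraproduct of the finite fields $\mathrm{F}_q$ (with the emerging metric described below) is the field $\mathbb{R}$.
   Context: Let $\mathcal{D}$ be a non-principal ultrafilter on $\mathbb{N}$ containing the set of primes, and let ${}^*\mathbb{Z}$ be the corresponding ultrapower of $\mathbb{Z}$. Let $\mathfrak{q}\in {}^*\mathbb{Z}$ be the non-standard prime represented in the $q$-th coordinate by $q$, so that $\mathrm{F}={}^*\mathbb{Z}_{\mathfrak{q}}\cong \prod_\mathcal{D}\mathrm{F}_q$ is the pseudofinite field that is the ultraproduct of the finite prime fields $\mathrm{F}_q$. Assume there is a model ${}^f\mathbb{Z}$ of arithmetic with $\mathbb{Z}\prec {}^f\mathbb{Z}\prec {}^*\mathbb{Z}$ and $\mathfrak{q}> {}^f\mathbb{Z}$ (so $\mathfrak{q}$ exceeds every element of ${}^f\mathbb{Z}$), and let $\mathfrak{l}\in {}^f\mathbb{Z}_{>0}$ be an infinite integer; then $\mathfrak{l}^n<\mathfrak{q}$ for all $n\in\mathbb{N}$. Put ${}^f\mathbb{Z}_{/\mathfrak{l}}(n)=\{k\in {}^*\mathbb{Z}: |k|<\mathfrak{l}^n\}$, which embeds in $\mathrm{F}$ via $k\mapsto k \bmod \mathfrak{q}$. For $m\in\mathbb{N}$ let $S_m(\mathrm{F})=\{z\in\mathrm{F}: \exists k_1,k_2\in {}^f\mathbb{Z}_{/\mathfrak{l}}(m),\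 z=k_1k_2^{-1},\ |k_1|/|k_2|\le m\}$ and $\mathrm{F}_{/\mathfrak{l}}=\bigcup_m S_m(\mathrm{F})$, a subfield of $\mathrm{F}$. On it define the norm $\|z\|=\mathrm{st}(|k_1|/|k_2|)$ for the minimal pair $k_1,k_2$ with $z=k_1k_2^{-1}$ ($\mathrm{st}$ the standard part), and the distance $\mathsf{d}(z_1,z_2)=\|z_1-z_2\|$. The same definitions are applied to each finite field $\mathrm{F}_q$ by interpreting $\mathfrak{l}$ as its $q$-th coordinate $\mathfrak{l}(q)$; these sorts $S_m$ and distance form an emerging metric on the family $\mathrm{F}_q$. The local ultraproduct $\mathsf{lm}^{\mathrm{loc}}\,\mathrm{F}_q$ is defined as follows: take the substructure of the first-order ultraproduct with universe $\bigcup_{m\in\mathbb{N}} S_m$ (here $\mathrm{F}_{/\mathfrak{l}}$), and quotient by the relation $x_1\approx x_2 \iff \mathsf{d}(x_1,x_2)\le 1/n$ for all standard $n$; the result is a complete metric structure. *)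

theory Defs
  imports "HOL-Analysis.Analysis" "HOL-Number_Theory.Number_Theory"
begin

text \<open>Elements of the ultraproduct F of the prime fields F_q are represented by
  sequences x :: nat => int, the q-th coordinate being read modulo q; ring operations
  are coordinatewise.  D is the ultrafilter (a nat filter), l the sequence representing
  the infinite integer (its q-th coordinate l(q)).\<close>

definition srep :: "nat filter \<Rightarrow> (nat \<Rightarrow> int) \<Rightarrow> nat \<Rightarrow> (nat \<Rightarrow> int)
    \<Rightarrow> (nat \<Rightarrow> int) \<Rightarrow> (nat \<Rightarrow> int) \<Rightarrow> bool" where
  "srep D l m x k1 k2 \<longleftrightarrow>
     eventually (\<lambda>q. \<bar>k1 q\<bar> < l q ^ m \<and> \<bar>k2 q\<bar> < l q ^ m \<and> k2 q \<noteq> 0 \<and>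
                     [x q * k2 q = k1 q] (mod int q) \<and> \<bar>k1 q\<bar> \<le> int m * \<bar>k2 q\<bar>) D"

definition Sm :: "nat filter \<Rightarrow> (nat \<Rightarrow> int) \<Rightarrow> nat \<Rightarrow> (nat \<Rightarrow> int) set" where
  "Sm D l m = {x. \<exists>k1 k2. srep D l m x k1 k2}"

definition Floc :: "nat filter \<Rightarrow> (nat \<Rightarrow> int) \<Rightarrow> (nat \<Rightarrow> int) set" where
  "Floc D l = (\<Union>m. Sm D l m)"

definition fnorm :: "nat filter \<Rightarrow> (nat \<Rightarrow> int) \<Rightarrow> (nat \<Rightarrow> int) \<Rightarrow> real" where
  "fnorm D l x = (THE r. \<exists>m k1 k2. srep D l m x k1 k2 \<and>
      ((\<lambda>q. real_of_int \<bar>k1 q\<bar> / real_of_int \<bar>k2 q\<bar>) \<longlongrightarrow> r) D)"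

definition fdist :: "nat filter \<Rightarrow> (nat \<Rightarrow> int) \<Rightarrow> (nat \<Rightarrow> int) \<Rightarrow> (nat \<Rightarrow> int) \<Rightarrow> real" where
  "fdist D l x y = fnorm D l (\<lambda>q. x q - y q)"

end

(*
  Represent an element of F_{/l} by a fraction k1/k2 with |k1|, |k2| < l^m and |k1/k2| <= m.
  Two such fractions for the same element have cross products that agree modulo q and are
  smaller than l^(m+m'+1) < q, hence they agree as integers.  So the D-limit of k1/k2, which
  exists because the quotients are bounded and D is an ultrafilter, is well defined; it is
  additive and multiplicative because limits are, its absolute value is the norm, and
  floor(r l)/l represents every real number r.
*)
theory Submission
  imports Defs
begin

lemma compact_ultrafilter_tendsto:
  fixes f :: "'a \<Rightarrow> 'b::topological_space"
  assumes "F \<noteq> bot" and ultra: "\<forall>P. eventually P F \<or> eventually (\<lambda>x. \<not> P x) F"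
    and "compact S" "eventually (\<lambda>x. f x \<in> S) F"
  shows "\<exists>L\<in>S. (f \<longlongrightarrow> L) F"
proof -
  have "filtermap f F \<noteq> bot" "eventually (\<lambda>z. z \<in> S) (filtermap f F)"
    using assms by (simp_all add: filtermap_bot_iff eventually_filtermap)
  then obtain L where "L \<in> S" and L: "inf (nhds L) (filtermap f F) \<noteq> bot"
    using \<open>compact S\<close> unfolding compact_filter by blast
  have "(f \<longlongrightarrow> L) F"
  proof (rule topological_tendstoI)
    fix U assume "open U" "L \<in> U"
    show "eventually (\<lambda>x. f x \<in> U) F"
    proof (rule ccontr)
      assume "\<not> eventually (\<lambda>x. f x \<in> U) F"
      then have "eventually (\<lambda>z. z \<notin> U) (filtermap f F)"
        using ultra[rule_format, of "\<lambda>x. f x \<in> U"] by (simp add: eventually_filtermap)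
      moreover have "eventually (\<lambda>z. z \<in> U) (nhds L)"
        using \<open>open U\<close> \<open>L \<in> U\<close> by (rule eventually_nhds_in_open)
      ultimately have "eventually (\<lambda>z. False) (inf (nhds L) (filtermap f F))"
        by (auto simp: eventually_inf intro!: exI)
      with L show False by (simp add: eventually_False)
    qed
  qed
  with \<open>L \<in> S\<close> show ?thesis by blast
qed

lemma cong_cross_mult_eq:
  fixes X a b c d Q :: int
  assumes "[X * b = a] (mod Q)" "[X * d = c] (mod Q)" "\<bar>a * d - c * b\<bar> < Q"
  shows "a * d = c * b"
proof -
  have "Q dvd (X * d - c) * b - (X * b - a) * d"
    using assms(1,2) by (simp add: cong_iff_dvd_diff)
  then have "Q dvd a * d - c * b" by (simp add: algebra_simps)
  show ?thesis
  proof (rule ccontr)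
    assume "a * d \<noteq> c * b"
    with \<open>Q dvd a * d - c * b\<close> have "\<bar>Q\<bar> \<le> \<bar>a * d - c * b\<bar>"
      by (intro dvd_imp_le_int) simp_all
    with assms(3) show False by simp
  qed
qed

lemma abs_mult_less_power_add:
  fixes u v L :: int
  assumes "\<bar>u\<bar> < L ^ m" "\<bar>v\<bar> < L ^ n"
  shows "\<bar>u * v\<bar> < L ^ (m + n)"
proof -
  have "\<bar>u\<bar> * \<bar>v\<bar> < L ^ m * L ^ n"
    by (rule mult_strict_mono) (use assms in auto)
  then show ?thesis by (simp add: abs_mult power_add)
qed

lemma tendsto_floor_mult_divide:
  fixes g :: "'a \<Rightarrow> real"
  assumes "filterlim g at_top F"
  shows "((\<lambda>x. \<lfloor>r * g x\<rfloor> / g x) \<longlongrightarrow> r) F"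
proof -
  have "eventually (\<lambda>x. norm (\<lfloor>r * g x\<rfloor> / g x - r) \<le> inverse (g x)) F"
    using filterlim_at_top_dense[THEN iffD1, OF assms, rule_format, of 0]
  proof eventually_elim
    case (elim x)
    have "\<lfloor>r * g x\<rfloor> / g x - r = (\<lfloor>r * g x\<rfloor> - r * g x) / g x"
      using elim by (simp add: field_simps)
    also have "\<bar>\<dots>\<bar> \<le> 1 / g x"
    proof -
      have "\<bar>\<lfloor>r * g x\<rfloor> - r * g x\<bar> \<le> 1" by linarith
      with elim show ?thesis by (simp add: abs_divide divide_right_mono)
    qed
    finally show ?case by (simp add: inverse_eq_divide)
  qed
  then have "((\<lambda>x. \<lfloor>r * g x\<rfloor> / g x - r) \<longlongrightarrow> 0) F"
    by (rule Lim_null_comparison[OF _ tendsto_inverse_0_at_top[OF assms]])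
  then show ?thesis by (simp add: Lim_null[of _ r])
qed

lemma abs_le_inverse_nat_iff:
  fixes t :: real
  shows "(\<forall>n::nat>0. \<bar>t\<bar> \<le> 1 / real n) \<longleftrightarrow> t = 0"
proof
  assume bound: "\<forall>n::nat>0. \<bar>t\<bar> \<le> 1 / real n"
  show "t = 0"
  proof (rule ccontr)
    assume "t \<noteq> 0"
    then obtain n where "0 < n" "inverse (real n) < \<bar>t\<bar>"
      using ex_inverse_of_nat_less[of "\<bar>t\<bar>"] by auto
    moreover from bound \<open>0 < n\<close> have "\<bar>t\<bar> \<le> 1 / real n" by blast
    ultimately show False by (simp add: inverse_eq_divide)
  qed
qed simp

definition frac_rep :: "int \<Rightarrow> nat \<Rightarrow> int \<Rightarrow> int \<Rightarrow> int \<Rightarrow> int \<Rightarrow> bool" where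
  "frac_rep L m Q X k1 k2 \<longleftrightarrow>
     \<bar>k1\<bar> < L ^ m \<and> \<bar>k2\<bar> < L ^ m \<and> k2 \<noteq> 0 \<and> [X * k2 = k1] (mod Q) \<and> \<bar>k1\<bar> \<le> int m * \<bar>k2\<bar>"

lemma srep_iff_eventually_frac_rep:
  "srep D l m x k1 k2 \<longleftrightarrow> eventually (\<lambda>q. frac_rep (l q) m (int q) (x q) (k1 q) (k2 q)) D"
  by (simp add: srep_def frac_rep_def)

lemma frac_rep_mono:
  assumes "frac_rep L m Q X a b" "m \<le> n" "1 \<le> L"
  shows "frac_rep L n Q X a b"
proof -
  have "L ^ m \<le> L ^ n" by (rule power_increasing) (use assms in auto)
  moreover have "int m * \<bar>b\<bar> \<le> int n * \<bar>b\<bar>" using assms(2) by (simp add: mult_right_mono)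
  ultimately show ?thesis using assms(1) unfolding frac_rep_def by linarith
qed

lemma frac_rep_uminus:
  assumes "frac_rep L m Q X a b"
  shows "frac_rep L m Q (- X) (- a) b"
  using assms by (simp add: frac_rep_def cong_minus_minus_iff)

lemma frac_rep_cross_mult_eq:
  assumes "frac_rep L m Q X a b" "frac_rep L n Q X c d" "2 \<le> L" "L ^ (m + n + 1) < Q"
  shows "a * d = c * b"
proof (rule cong_cross_mult_eq)
  show "[X * b = a] (mod Q)" "[X * d = c] (mod Q)"
    using assms(1,2) by (simp_all add: frac_rep_def)
  have "\<bar>a * d\<bar> < L ^ (m + n)" "\<bar>c * b\<bar> < L ^ (n + m)"
    using assms(1,2) by (auto simp: frac_rep_def intro: abs_mult_less_power_add)
  then have "\<bar>a * d - c * b\<bar> < 2 * L ^ (m + n)" by (simp add: add.commute)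
  also have "\<dots> \<le> L ^ (m + n + 1)" using assms(3) by simp
  finally show "\<bar>a * d - c * b\<bar> < Q" using assms(4) by simp
qed

lemma two_power_double_le_power_Suc_square:
  fixes L :: int
  assumes "2 \<le> L"
  shows "2 * L ^ (m + m) \<le> L ^ (Suc m ^ 2)"
proof -
  have "2 * L ^ (m + m) \<le> L ^ Suc (m + m)" using assms by simp
  also have "\<dots> \<le> L ^ (Suc m ^ 2)" using assms by (intro power_increasing) (simp_all add: power2_eq_square)
  finally show ?thesis .
qed

lemma frac_rep_add:
  assumes x: "frac_rep L m Q X a b" and y: "frac_rep L m Q Y c d" and "2 \<le> L"
  shows "frac_rep L (Suc m ^ 2) Q (X + Y) (a * d + c * b) (b * d)"
  unfolding frac_rep_def
proof (intro conjI)
  have L: "2 * L ^ (m + m) \<le> L ^ (Suc m ^ 2)"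
    using \<open>2 \<le> L\<close> by (rule two_power_double_le_power_Suc_square)
  have "\<bar>a * d\<bar> < L ^ (m + m)" "\<bar>c * b\<bar> < L ^ (m + m)" "\<bar>b * d\<bar> < L ^ (m + m)"
    using x y by (auto simp: frac_rep_def intro: abs_mult_less_power_add)
  with L show "\<bar>a * d + c * b\<bar> < L ^ (Suc m ^ 2)" "\<bar>b * d\<bar> < L ^ (Suc m ^ 2)"
    by linarith+
  show "b * d \<noteq> 0" using x y by (simp add: frac_rep_def)
  have "[X * b * d + Y * d * b = a * d + c * b] (mod Q)"
    using x y unfolding frac_rep_def by (intro cong_add cong_mult cong_refl) simp_all
  then show "[(X + Y) * (b * d) = a * d + c * b] (mod Q)" by (simp add: algebra_simps)
  have "\<bar>a * d + c * b\<bar> \<le> \<bar>a\<bar> * \<bar>d\<bar> + \<bar>c\<bar> * \<bar>b\<bar>"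
    by (metis abs_mult abs_triangle_ineq)
  also have "\<dots> \<le> int m * \<bar>b\<bar> * \<bar>d\<bar> + int m * \<bar>d\<bar> * \<bar>b\<bar>"
    using x y unfolding frac_rep_def by (intro add_mono mult_right_mono) simp_all
  also have "\<dots> \<le> int (Suc m ^ 2) * \<bar>b * d\<bar>"
    by (simp add: abs_mult power2_eq_square algebra_simps mult_right_mono)
  finally show "\<bar>a * d + c * b\<bar> \<le> int (Suc m ^ 2) * \<bar>b * d\<bar>" .
qed

lemma frac_rep_mult:
  assumes x: "frac_rep L m Q X a b" and y: "frac_rep L m Q Y c d" and "2 \<le> L"
  shows "frac_rep L (Suc m ^ 2) Q (X * Y) (a * c) (b * d)"
  unfolding frac_rep_def
proof (intro conjI)
  have L: "2 * L ^ (m + m) \<le> L ^ (Suc m ^ 2)"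
    using \<open>2 \<le> L\<close> by (rule two_power_double_le_power_Suc_square)
  have "\<bar>a * c\<bar> < L ^ (m + m)" "\<bar>b * d\<bar> < L ^ (m + m)"
    using x y by (auto simp: frac_rep_def intro: abs_mult_less_power_add)
  with L show "\<bar>a * c\<bar> < L ^ (Suc m ^ 2)" "\<bar>b * d\<bar> < L ^ (Suc m ^ 2)"
    by linarith+
  show "b * d \<noteq> 0" using x y by (simp add: frac_rep_def)
  have "[X * b * (Y * d) = a * c] (mod Q)"
    using x y unfolding frac_rep_def by (intro cong_mult) simp_all
  then show "[X * Y * (b * d) = a * c] (mod Q)" by (simp add: algebra_simps)
  have "\<bar>a * c\<bar> \<le> int m * \<bar>b\<bar> * (int m * \<bar>d\<bar>)"
    using x y unfolding frac_rep_def abs_mult by (intro mult_mono) simp_all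
  also have "\<dots> \<le> int (Suc m ^ 2) * \<bar>b * d\<bar>"
    by (simp add: abs_mult power2_eq_square algebra_simps mult_right_mono)
  finally show "\<bar>a * c\<bar> \<le> int (Suc m ^ 2) * \<bar>b * d\<bar>" .
qed

lemma frac_rep_floor:
  fixes r :: real and L u Q :: int
  assumes "\<bar>r\<bar> + 1 \<le> real K" "2 \<le> K" "int K < L" "[L * u = 1] (mod Q)"
  shows "frac_rep L K Q (\<lfloor>r * L\<rfloor> * u) \<lfloor>r * L\<rfloor> L"
  unfolding frac_rep_def
proof (intro conjI)
  have "0 < L" using assms(2,3) by linarith
  have "\<bar>real_of_int \<lfloor>r * L\<rfloor> - r * L\<bar> \<le> 1" by linarith
  moreover have "\<bar>r * L\<bar> = \<bar>r\<bar> * L" using \<open>0 < L\<close> by (simp add: abs_mult)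
  ultimately have "\<bar>real_of_int \<lfloor>r * L\<rfloor>\<bar> \<le> \<bar>r\<bar> * L + 1" by linarith
  also have "\<dots> \<le> (\<bar>r\<bar> + 1) * L" using \<open>0 < L\<close> by (simp add: algebra_simps)
  also have "\<dots> \<le> real K * L" using assms(1) \<open>0 < L\<close> by (intro mult_right_mono) simp_all
  finally have floor_le: "\<bar>\<lfloor>r * L\<rfloor>\<bar> \<le> int K * L"
    by (metis of_int_abs of_int_le_iff of_int_mult of_int_of_nat_eq)
  then show "\<bar>\<lfloor>r * L\<rfloor>\<bar> \<le> int K * \<bar>L\<bar>" using \<open>0 < L\<close> by simp
  have "L ^ 2 \<le> L ^ K" using assms(2) \<open>0 < L\<close> by (intro power_increasing) simp_all
  moreover have "int K * L < L ^ 2" "\<bar>L\<bar> < L ^ 2"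
    using assms(2,3) \<open>0 < L\<close> by (simp_all add: power2_eq_square)
  ultimately show "\<bar>\<lfloor>r * L\<rfloor>\<bar> < L ^ K" "\<bar>L\<bar> < L ^ K" using floor_le by linarith+
  show "L \<noteq> 0" using \<open>0 < L\<close> by simp
  have "[\<lfloor>r * L\<rfloor> * (L * u) = \<lfloor>r * L\<rfloor> * 1] (mod Q)"
    using assms(4) by (intro cong_mult cong_refl)
  then show "[\<lfloor>r * L\<rfloor> * u * L = \<lfloor>r * L\<rfloor>] (mod Q)" by (simp add: ac_simps)
qed

lemma prime_ex_inverse_mod:
  fixes a :: int
  assumes "prime p" "0 < a" "a < int p"
  shows "\<exists>u. [a * u = 1] (mod int p)"
proof (rule cong_solve_coprime_int)
  have "coprime (int p) a"
    using assms by (intro prime_imp_coprime) (simp_all add: zdvd_not_zless)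
  then show "coprime a (int p)" by (simp add: coprime_commute)
qed

lemma mem_Floc_iff: "x \<in> Floc D l \<longleftrightarrow> (\<exists>m k1 k2. srep D l m x k1 k2)"
  by (auto simp: Floc_def Sm_def)

lemma srep_nonzero:
  assumes "srep D l m x a b"
  shows "eventually (\<lambda>q. b q \<noteq> 0) D"
  using assms unfolding srep_def by (rule eventually_mono) simp

lemma srep_ratio_bounded:
  assumes "srep D l m x a b"
  shows "eventually (\<lambda>q. real_of_int (a q) / real_of_int (b q) \<in> {- real m..real m}) D"
  using assms unfolding srep_def
proof eventually_elim
  case (elim q)
  then have "real_of_int \<bar>a q\<bar> \<le> real m * real_of_int \<bar>b q\<bar>"
    by (metis of_int_le_iff of_int_mult of_int_of_nat_eq)
  then have "\<bar>real_of_int (a q) / real_of_int (b q)\<bar> \<le> real m"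
    using elim by (simp add: abs_divide pos_divide_le_eq)
  then show ?case by (simp del: abs_divide add: abs_le_iff)
qed

lemma srep_uminus: "srep D l m x a b \<Longrightarrow> srep D l m (\<lambda>q. - x q) (\<lambda>q. - a q) b"
  unfolding srep_iff_eventually_frac_rep by (auto elim: eventually_mono intro: frac_rep_uminus)

definition std_part :: "nat filter \<Rightarrow> (nat \<Rightarrow> int) \<Rightarrow> (nat \<Rightarrow> int) \<Rightarrow> real" where
  "std_part D l x = (THE r. \<exists>m k1 k2. srep D l m x k1 k2 \<and>
      ((\<lambda>q. real_of_int (k1 q) / real_of_int (k2 q)) \<longlongrightarrow> r) D)"

locale prime_field_ultraproduct =
  fixes D :: "nat filter" and l :: "nat \<Rightarrow> int"
  assumes proper: "D \<noteq> bot"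
    and ultra: "\<forall>P. eventually P D \<or> eventually (\<lambda>q. \<not> P q) D"
    and primes: "eventually (\<lambda>q. prime q) D"
    and l_infinite: "\<forall>N::int. eventually (\<lambda>q. l q > N) D"
    and l_small: "\<forall>n::nat. eventually (\<lambda>q. l q ^ n < int q) D"
begin

lemma eventually_l_ge_2: "eventually (\<lambda>q. 2 \<le> l q) D"
  using l_infinite[rule_format, of 1] by (rule eventually_mono) simp

lemma srep_mono:
  assumes "srep D l m x a b" "m \<le> n"
  shows "srep D l n x a b"
  using eventually_l_ge_2 assms(1) unfolding srep_iff_eventually_frac_rep
  by eventually_elim (use assms(2) in \<open>auto intro: frac_rep_mono\<close>)

lemma Floc_common_srep:
  assumes "x \<in> Floc D l" "y \<in> Floc D l"
  obtains m a b c d where "srep D l m x a b" "srep D l m y c d"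
proof -
  obtain m a b m' c d where "srep D l m x a b" "srep D l m' y c d"
    using assms by (auto simp: mem_Floc_iff)
  then show thesis
    using that[of "max m m'"] srep_mono by (meson max.cobounded1 max.cobounded2)
qed

lemma srep_ratio_eq:
  assumes "srep D l m x a b" "srep D l n x c d"
  shows "eventually (\<lambda>q. real_of_int (a q) / real_of_int (b q) =
                         real_of_int (c q) / real_of_int (d q)) D"
  using assms eventually_l_ge_2 l_small[rule_format, of "m + n + 1"]
  unfolding srep_iff_eventually_frac_rep
proof eventually_elim
  case (elim q)
  then have "a q * d q = c q * b q" by (rule frac_rep_cross_mult_eq)
  then have "real_of_int (a q) * real_of_int (d q) = real_of_int (c q) * real_of_int (b q)"
    by (metis of_int_mult)
  with elim show ?case by (simp add: frac_rep_def field_simps)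
qed

lemma std_part_eqI:
  assumes "srep D l m x a b" "((\<lambda>q. real_of_int (a q) / real_of_int (b q)) \<longlongrightarrow> r) D"
  shows "std_part D l x = r"
  unfolding std_part_def
proof (rule the_equality)
  fix r' assume "\<exists>n c d. srep D l n x c d \<and> ((\<lambda>q. real_of_int (c q) / real_of_int (d q)) \<longlongrightarrow> r') D"
  then obtain n c d where "srep D l n x c d" "((\<lambda>q. real_of_int (c q) / real_of_int (d q)) \<longlongrightarrow> r') D"
    by blast
  then have "((\<lambda>q. real_of_int (a q) / real_of_int (b q)) \<longlongrightarrow> r') D"
    using srep_ratio_eq[OF assms(1)] tendsto_cong by fastforce
  with assms(2) show "r' = r" using tendsto_unique[OF proper] by blast
qed (use assms in blast)

lemma srep_tendsto_std_part:
  assumes "srep D l m x a b"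
  shows "((\<lambda>q. real_of_int (a q) / real_of_int (b q)) \<longlongrightarrow> std_part D l x) D"
proof -
  obtain r where "((\<lambda>q. real_of_int (a q) / real_of_int (b q)) \<longlongrightarrow> r) D"
    using compact_ultrafilter_tendsto[OF proper ultra compact_Icc srep_ratio_bounded[OF assms]]
    by blast
  with std_part_eqI[OF assms this] show ?thesis by simp
qed

lemma fnorm_eq_abs_std_part:
  assumes "srep D l m x a b"
  shows "fnorm D l x = \<bar>std_part D l x\<bar>"
proof -
  have abs_ratio: "((\<lambda>q. real_of_int \<bar>c q\<bar> / real_of_int \<bar>d q\<bar>) \<longlongrightarrow> \<bar>std_part D l x\<bar>) D"
    if "srep D l n x c d" for n c d
    using tendsto_rabs[OF srep_tendsto_std_part[OF that]] by (simp add: abs_divide)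
  show ?thesis
    unfolding fnorm_def
  proof (rule the_equality)
    fix r assume "\<exists>n c d. srep D l n x c d \<and> ((\<lambda>q. real_of_int \<bar>c q\<bar> / real_of_int \<bar>d q\<bar>) \<longlongrightarrow> r) D"
    then show "r = \<bar>std_part D l x\<bar>" using abs_ratio tendsto_unique[OF proper] by blast
  qed (use assms abs_ratio in blast)
qed

lemma srep_add:
  assumes "srep D l m x a b" "srep D l m y c d"
  shows "srep D l (Suc m ^ 2) (\<lambda>q. x q + y q) (\<lambda>q. a q * d q + c q * b q) (\<lambda>q. b q * d q)"
  using assms eventually_l_ge_2 unfolding srep_iff_eventually_frac_rep
  by eventually_elim (rule frac_rep_add)

lemma srep_mult:
  assumes "srep D l m x a b" "srep D l m y c d"
  shows "srep D l (Suc m ^ 2) (\<lambda>q. x q * y q) (\<lambda>q. a q * c q) (\<lambda>q. b q * d q)"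
  using assms eventually_l_ge_2 unfolding srep_iff_eventually_frac_rep
  by eventually_elim (rule frac_rep_mult)

lemma Floc_uminus: "x \<in> Floc D l \<Longrightarrow> (\<lambda>q. - x q) \<in> Floc D l"
  by (auto simp: mem_Floc_iff dest: srep_uminus)

lemma Floc_add:
  assumes "x \<in> Floc D l" "y \<in> Floc D l"
  shows "(\<lambda>q. x q + y q) \<in> Floc D l"
  using Floc_common_srep[OF assms] by (metis mem_Floc_iff srep_add)

lemma Floc_mult:
  assumes "x \<in> Floc D l" "y \<in> Floc D l"
  shows "(\<lambda>q. x q * y q) \<in> Floc D l"
  using Floc_common_srep[OF assms] by (metis mem_Floc_iff srep_mult)

lemma Floc_diff:
  assumes "x \<in> Floc D l" "y \<in> Floc D l"
  shows "(\<lambda>q. x q - y q) \<in> Floc D l"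
  using Floc_add[OF assms(1) Floc_uminus[OF assms(2)]] by simp

lemma std_part_uminus:
  assumes "x \<in> Floc D l"
  shows "std_part D l (\<lambda>q. - x q) = - std_part D l x"
proof -
  obtain m a b where x: "srep D l m x a b" using assms by (auto simp: mem_Floc_iff)
  show ?thesis
    by (rule std_part_eqI[OF srep_uminus[OF x]])
       (use tendsto_minus[OF srep_tendsto_std_part[OF x]] in simp)
qed

lemma std_part_add:
  assumes "x \<in> Floc D l" "y \<in> Floc D l"
  shows "std_part D l (\<lambda>q. x q + y q) = std_part D l x + std_part D l y"
proof -
  obtain m a b c d where x: "srep D l m x a b" and y: "srep D l m y c d"
    using Floc_common_srep[OF assms] .
  have "eventually (\<lambda>q. real_of_int (a q) / real_of_int (b q) + real_of_int (c q) / real_of_int (d q)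
      = real_of_int (a q * d q + c q * b q) / real_of_int (b q * d q)) D"
    using srep_nonzero[OF x] srep_nonzero[OF y] by eventually_elim (simp add: field_simps)
  with tendsto_add[OF srep_tendsto_std_part[OF x] srep_tendsto_std_part[OF y]]
  show ?thesis by (intro std_part_eqI[OF srep_add[OF x y]]) (rule tendsto_cong[THEN iffD1])
qed

lemma std_part_mult:
  assumes "x \<in> Floc D l" "y \<in> Floc D l"
  shows "std_part D l (\<lambda>q. x q * y q) = std_part D l x * std_part D l y"
proof -
  obtain m a b c d where x: "srep D l m x a b" and y: "srep D l m y c d"
    using Floc_common_srep[OF assms] .
  have "eventually (\<lambda>q. real_of_int (a q) / real_of_int (b q) * (real_of_int (c q) / real_of_int (d q))
      = real_of_int (a q * c q) / real_of_int (b q * d q)) D"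
    using srep_nonzero[OF x] srep_nonzero[OF y] by eventually_elim simp
  with tendsto_mult[OF srep_tendsto_std_part[OF x] srep_tendsto_std_part[OF y]]
  show ?thesis by (intro std_part_eqI[OF srep_mult[OF x y]]) (rule tendsto_cong[THEN iffD1])
qed

lemma std_part_diff:
  assumes "x \<in> Floc D l" "y \<in> Floc D l"
  shows "std_part D l (\<lambda>q. x q - y q) = std_part D l x - std_part D l y"
  using std_part_add[OF assms(1) Floc_uminus[OF assms(2)]] std_part_uminus[OF assms(2)] by simp

lemma fdist_eq_abs_diff:
  assumes "x \<in> Floc D l" "y \<in> Floc D l"
  shows "fdist D l x y = \<bar>std_part D l x - std_part D l y\<bar>"
proof -
  obtain m a b where "srep D l m (\<lambda>q. x q - y q) a b"
    using Floc_diff[OF assms] by (auto simp: mem_Floc_iff)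
  then show ?thesis
    unfolding fdist_def by (simp add: fnorm_eq_abs_std_part std_part_diff[OF assms])
qed

lemma srep_one: "srep D l 2 (\<lambda>q. 1) (\<lambda>q. 1) (\<lambda>q. 1)"
  using eventually_l_ge_2 unfolding srep_def
proof eventually_elim
  case (elim q)
  then have "1 < l q ^ 2" by (simp add: power2_eq_square less_1_mult)
  then show ?case by simp
qed

lemma Floc_one: "(\<lambda>q. 1) \<in> Floc D l"
  using srep_one by (auto simp: mem_Floc_iff)

lemma std_part_one: "std_part D l (\<lambda>q. 1) = 1"
  by (rule std_part_eqI[OF srep_one]) simp

lemma filterlim_l_at_top: "filterlim (\<lambda>q. real_of_int (l q)) at_top D"
proof -
  have "filterlim l at_top D"
    unfolding filterlim_at_top
  proof
    fix Z show "eventually (\<lambda>q. Z \<le> l q) D"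
      using l_infinite[rule_format, of Z] by (rule eventually_mono) simp
  qed
  then show ?thesis by (rule filterlim_compose[OF filterlim_real_of_int_at_top])
qed

lemma l_invertible_mod:
  obtains u where "eventually (\<lambda>q. [l q * u q = 1] (mod int q)) D"
proof -
  have "\<exists>u. \<forall>q. prime q \<and> 0 < l q \<and> l q < int q \<longrightarrow> [l q * u q = 1] (mod int q)"
    using prime_ex_inverse_mod by (intro choice) blast
  then obtain u where u: "\<And>q. prime q \<Longrightarrow> 0 < l q \<Longrightarrow> l q < int q \<Longrightarrow> [l q * u q = 1] (mod int q)"
    by blast
  have "eventually (\<lambda>q. [l q * u q = 1] (mod int q)) D"
    using primes eventually_l_ge_2 l_small[rule_format, of 1]
    by eventually_elim (simp add: u)
  then show thesis by (rule that)
qed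

lemma std_part_surj: "std_part D l ` Floc D l = UNIV"
proof -
  obtain u where u: "eventually (\<lambda>q. [l q * u q = 1] (mod int q)) D"
    by (rule l_invertible_mod)
  have "r \<in> std_part D l ` Floc D l" for r
  proof -
    define K where "K = nat \<lceil>\<bar>r\<bar>\<rceil> + 2"
    have K: "\<bar>r\<bar> + 1 \<le> real K" "2 \<le> K"
      unfolding K_def by linarith+
    have rep: "srep D l K (\<lambda>q. \<lfloor>r * l q\<rfloor> * u q) (\<lambda>q. \<lfloor>r * l q\<rfloor>) l"
      using u l_infinite[rule_format, of "int K"] unfolding srep_iff_eventually_frac_rep
      by eventually_elim (use K in \<open>simp add: frac_rep_floor\<close>)
    have "r = std_part D l (\<lambda>q. \<lfloor>r * l q\<rfloor> * u q)"
      using tendsto_floor_mult_divide[OF filterlim_l_at_top] by (rule std_part_eqI[OF rep, symmetric])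
    moreover have "(\<lambda>q. \<lfloor>r * l q\<rfloor> * u q) \<in> Floc D l"
      using rep by (auto simp: mem_Floc_iff)
    ultimately show ?thesis by (intro rev_image_eqI)
  qed
  then show ?thesis by blast
qed

end

theorem proposition3p4:
  fixes D :: "nat filter" and l :: "nat \<Rightarrow> int"
  assumes proper: "D \<noteq> bot"
    and ultra: "\<forall>P. eventually P D \<or> eventually (\<lambda>q. \<not> P q) D"
    and nonprincipal: "\<forall>n. eventually (\<lambda>q. q \<noteq> n) D"
    and primes: "eventually (\<lambda>q. prime q) D"
    and l_infinite: "\<forall>N::int. eventually (\<lambda>q. l q > N) D"
    and l_small: "\<forall>n::nat. eventually (\<lambda>q. l q ^ n < int q) D"
  shows "\<exists>\<phi> :: (nat \<Rightarrow> int) \<Rightarrow> real.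
     (\<forall>x\<in>Floc D l. \<forall>y\<in>Floc D l.
        (\<lambda>q. x q + y q) \<in> Floc D l \<and> (\<lambda>q. x q * y q) \<in> Floc D l \<and>
        (\<lambda>q. x q - y q) \<in> Floc D l \<and>
        \<phi> (\<lambda>q. x q + y q) = \<phi> x + \<phi> y \<and> \<phi> (\<lambda>q. x q * y q) = \<phi> x * \<phi> y \<and>
        \<bar>\<phi> x - \<phi> y\<bar> = fdist D l x y \<and>
        (\<phi> x = \<phi> y \<longleftrightarrow> (\<forall>n::nat>0. fdist D l x y \<le> 1 / real n))) \<and>
     (\<lambda>q. 1) \<in> Floc D l \<and> \<phi> (\<lambda>q. 1) = 1 \<and>
     \<phi> ` Floc D l = UNIV"
proof -
  interpret prime_field_ultraproduct D l
    using proper ultra primes l_infinite l_small by unfold_locales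
  show ?thesis
  proof (intro exI[of _ "std_part D l"] conjI ballI)
    fix x y assume x: "x \<in> Floc D l" and y: "y \<in> Floc D l"
    show "(\<lambda>q. x q + y q) \<in> Floc D l" "(\<lambda>q. x q * y q) \<in> Floc D l" "(\<lambda>q. x q - y q) \<in> Floc D l"
      using Floc_add Floc_mult Floc_diff x y by blast+
    show "std_part D l (\<lambda>q. x q + y q) = std_part D l x + std_part D l y"
      "std_part D l (\<lambda>q. x q * y q) = std_part D l x * std_part D l y"
      using std_part_add std_part_mult x y by blast+
    show "\<bar>std_part D l x - std_part D l y\<bar> = fdist D l x y"
      using fdist_eq_abs_diff[OF x y] by simp
    show "std_part D l x = std_part D l y \<longleftrightarrow> (\<forall>n::nat>0. fdist D l x y \<le> 1 / real n)"
      using fdist_eq_abs_diff[OF x y] abs_le_inverse_nat_iff by simp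
  qed (use Floc_one std_part_one std_part_surj in auto)
qed

end
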